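(* Let $\Gamma$ be a graph on $n$ vertices with at least $cn^2$ edges, where $c>0$. Then there exists a set $X$ of vertices with $|X|\ge 2^{-5}cn$ such that for any two vertices $x,y\in X$ there are at least $2^{-35}c^9n^5$ paths of length $6$ between $x$ and $y$.
   Context: A path of length 6 between $x$ and $y$ is a sequence of vertices $x=v_0,v_1,\dots,v_6=y$ in which each consecutive pair $v_{i-1}v_i$ is an edge (vertices need not be distinct); the count is of such sequences. *)

theory Defs
  imports Main Complex_Main
begin

definition graph :: "'a set \<Rightarrow> ('a \<Rightarrow> 'a \<Rightarrow> bool) \<Rightarrow> bool" where
  "graph V E \<longleftrightarrow> finite V \<and> (\<forall>x y. E x y \<longrightarrow> x \<in> V \<and> y \<in> V)
     \<and> (\<forall>x y. E x y \<longrightarrow> E y x) \<and> (\<forall>x. \<not> E x x)"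

definition edges :: "'a set \<Rightarrow> ('a \<Rightarrow> 'a \<Rightarrow> bool) \<Rightarrow> 'a set set" where
  "edges V E = {{x, y} | x y. x \<in> V \<and> y \<in> V \<and> E x y}"

text \<open>Paths (walks) of length k from x to y: sequences x = v0, ..., vk = y
  with consecutive vertices adjacent, represented as lists of length k+1.\<close>
definition walks :: "'a set \<Rightarrow> ('a \<Rightarrow> 'a \<Rightarrow> bool) \<Rightarrow> nat \<Rightarrow> 'a \<Rightarrow> 'a \<Rightarrow> 'a list set" where
  "walks V E k x y = {vs. length vs = Suc k \<and> set vs \<subseteq> V \<and> vs ! 0 = x \<and> vs ! k = y
      \<and> (\<forall>i<k. E (vs ! i) (vs ! Suc i))}"

end

theory Submission
  imports Defs "HOL-Analysis.Convex"
begin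

text \<open>Dependent random choice. Call a pair of vertices bad if its codegree is below
  m = c^2 n / 16. Counted through their common neighbours, the neighbourhoods of all vertices
  contain together at most n^2 m = c^2 n^3 / 16 bad pairs, whereas by Cauchy-Schwarz the squared
  degrees sum to at least c^2 n^3. Hence some vertex v has degree k \<ge> c n / 2 and at most k^2 / 8
  bad pairs in its neighbourhood N(v). Let X be the set of vertices of N(v) with at most k / 4 bad
  partners in N(v); then |X| \<ge> k / 2. For x, y in X at least 7 k^2 / 16 pairs (z, w) in N(v)
  make xz, zw, wy all good, and each of them extends to at least m^3 walks x a z b w c y.\<close>

lemma card_filter_eq_sum:
  "finite A \<Longrightarrow> card {x\<in>A. P x} = (\<Sum>x\<in>A. if P x then 1 else 0)"
  by (simp add: sum.inter_filter[symmetric])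

lemma card_less_le_sum:
  fixes f :: "'a \<Rightarrow> nat"
  assumes "finite A"
  shows "t * card {x\<in>A. t < f x} \<le> (\<Sum>x\<in>A. f x)"
proof -
  have "t * card {x\<in>A. t < f x} = (\<Sum>x\<in>{x\<in>A. t < f x}. t)" by simp
  also have "\<dots> \<le> (\<Sum>x\<in>{x\<in>A. t < f x}. f x)" by (rule sum_mono) simp
  also have "\<dots> \<le> (\<Sum>x\<in>A. f x)" using assms by (intro sum_mono2) auto
  finally show ?thesis .
qed

lemma card_times_le_card_avoiding:
  assumes "finite A" "G \<subseteq> A" "H \<subseteq> A"
  shows "card G * card H \<le> card {p\<in>G \<times> H. \<not> P p} + card {p\<in>A \<times> A. P p}"
proof -
  have "card (G \<times> H) = card ({p\<in>G \<times> H. \<not> P p} \<union> {p\<in>G \<times> H. P p})"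
    by (rule arg_cong[where f = card]) blast
  also have "\<dots> \<le> card {p\<in>G \<times> H. \<not> P p} + card {p\<in>G \<times> H. P p}"
    by (rule card_Un_le)
  also have "\<dots> \<le> card {p\<in>G \<times> H. \<not> P p} + card {p\<in>A \<times> A. P p}"
    using assms by (intro add_left_mono card_mono) auto
  finally show ?thesis
    by (simp add: card_cartesian_product)
qed

lemma card_pairs_eq_sum:
  "finite A \<Longrightarrow> card {p\<in>A \<times> A. B (fst p) (snd p)} = (\<Sum>x\<in>A. card {y\<in>A. B x y})"
proof -
  assume "finite A"
  have "{p\<in>A \<times> A. B (fst p) (snd p)} = (SIGMA x:A. {y\<in>A. B x y})" by auto
  then show ?thesis using \<open>finite A\<close> by simp
qed

lemma card_few_bad_partners_ge:
  assumes "finite A" and bad: "8 * card {p\<in>A \<times> A. B (fst p) (snd p)} \<le> card A ^ 2"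
  shows "card A \<le> 2 * card {x\<in>A. 4 * card {y\<in>A. B x y} \<le> card A}"
proof -
  let ?k = "card A"
  let ?X = "{x\<in>A. 4 * card {y\<in>A. B x y} \<le> ?k}"
  let ?Y = "{x\<in>A. ?k < 4 * card {y\<in>A. B x y}}"
  have "?k * card ?Y \<le> (\<Sum>x\<in>A. 4 * card {y\<in>A. B x y})"
    using assms(1) by (rule card_less_le_sum)
  also have "\<dots> = 4 * card {p\<in>A \<times> A. B (fst p) (snd p)}"
    using assms(1) by (simp add: card_pairs_eq_sum sum_distrib_left)
  finally have "2 * (?k * card ?Y) \<le> ?k * ?k"
    using bad unfolding power2_eq_square by linarith
  then have "2 * card ?Y \<le> ?k"
    using assms(1) by (cases "?k = 0") auto
  moreover have "?k = card ?X + card ?Y"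
    using assms(1) by (subst card_Un_disjoint[symmetric]) (auto intro: arg_cong[where f = card])
  ultimately show ?thesis by linarith
qed

lemma card_good_pairs_ge:
  assumes "finite A" and bad: "8 * card {p\<in>A \<times> A. B (fst p) (snd p)} \<le> card A ^ 2"
    and x: "4 * card {z\<in>A. B x z} \<le> card A" and y: "4 * card {w\<in>A. B y w} \<le> card A"
  shows "7 * card A ^ 2 \<le> 16 * card {(z, w)\<in>A \<times> A. \<not> B x z \<and> \<not> B z w \<and> \<not> B y w}"
proof -
  let ?k = "card A"
  define G where "G = {z\<in>A. \<not> B x z}"
  define H where "H = {w\<in>A. \<not> B y w}"
  have "?k = card G + card {z\<in>A. B x z}" "?k = card H + card {w\<in>A. B y w}"
    unfolding G_def H_def using assms(1)
    by (subst card_Un_disjoint[symmetric]; auto intro: arg_cong[where f = card])+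
  then have "3 * ?k \<le> 4 * card G" "3 * ?k \<le> 4 * card H"
    using x y by linarith+
  then have "(3 * ?k) * (3 * ?k) \<le> (4 * card G) * (4 * card H)"
    by (rule mult_le_mono)
  moreover have "card G * card H \<le> card {p\<in>G \<times> H. \<not> B (fst p) (snd p)} + card {p\<in>A \<times> A. B (fst p) (snd p)}"
    using assms(1) by (rule card_times_le_card_avoiding) (auto simp: G_def H_def)
  moreover have "{p\<in>G \<times> H. \<not> B (fst p) (snd p)} = {(z, w)\<in>A \<times> A. \<not> B x z \<and> \<not> B z w \<and> \<not> B y w}"
    by (auto simp: G_def H_def)
  ultimately show ?thesis
    using bad by (simp add: power2_eq_square)
qed

locale finite_graph =
  fixes V :: "'a set" and E :: "'a \<Rightarrow> 'a \<Rightarrow> bool"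
  assumes graph: "graph V E"
begin

lemma finite_V: "finite V"
  and edge_in_V: "E x y \<Longrightarrow> x \<in> V"
  and edge_sym: "E x y \<Longrightarrow> E y x"
  using graph unfolding graph_def by auto

definition nbhd :: "'a \<Rightarrow> 'a set" where
  "nbhd v = {u\<in>V. E v u}"

abbreviation degree :: "'a \<Rightarrow> nat" where
  "degree v \<equiv> card (nbhd v)"

definition codeg :: "'a \<Rightarrow> 'a \<Rightarrow> nat" where
  "codeg x y = card (nbhd x \<inter> nbhd y)"

lemma nbhd_subset: "nbhd v \<subseteq> V"
  by (auto simp: nbhd_def)

lemma finite_nbhd: "finite (nbhd v)"
  using finite_V by (simp add: nbhd_def)

lemma codeg_commute: "codeg x y = codeg y x"
  by (simp add: codeg_def Int_commute)

lemma card_edges_le_sum_degree: "card (edges V E) \<le> (\<Sum>v\<in>V. degree v)"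
proof -
  have "edges V E \<subseteq> (\<lambda>(x, y). {x, y}) ` (SIGMA x:V. nbhd x)"
    by (auto simp: edges_def nbhd_def)
  then have "card (edges V E) \<le> card (SIGMA x:V. nbhd x)"
    by (meson card_image_le card_mono finite_SigmaI finite_V finite_imageI finite_nbhd le_trans)
  then show ?thesis
    using finite_V finite_nbhd by simp
qed

lemma edge_density_le_one:
  assumes "V \<noteq> {}" "c * real (card V) ^ 2 \<le> real (card (edges V E))"
  shows "c \<le> 1"
proof -
  have "(\<Sum>v\<in>V. degree v) \<le> (\<Sum>v\<in>V. card V)"
    using finite_V by (intro sum_mono card_mono) (auto simp: nbhd_subset)
  then have "card (edges V E) \<le> card V ^ 2"
    using card_edges_le_sum_degree by (simp add: power2_eq_square)
  then have "c * real (card V) ^ 2 \<le> 1 * real (card V) ^ 2"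
    using assms(2) by (metis mult_1 of_nat_le_iff of_nat_power order.trans)
  then show ?thesis
    using assms(1) finite_V by (simp add: card_gt_0_iff)
qed

lemma sum_card_nbhd_pairs:
  "(\<Sum>v\<in>V. card {p\<in>nbhd v \<times> nbhd v. P p}) = (\<Sum>p\<in>{p\<in>V \<times> V. P p}. codeg (fst p) (snd p))"
proof -
  let ?Q = "{p\<in>V \<times> V. P p}"
  let ?adj = "\<lambda>v p. v \<in> nbhd (fst p) \<inter> nbhd (snd p)"
  have fin: "finite ?Q" using finite_V by simp
  have "card {p\<in>nbhd v \<times> nbhd v. P p} = (\<Sum>p\<in>?Q. if ?adj v p then 1 else 0)" if "v \<in> V" for v
  proof -
    have "{p\<in>nbhd v \<times> nbhd v. P p} = {p\<in>?Q. ?adj v p}"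
      using that by (auto simp: nbhd_def intro: edge_sym)
    then show ?thesis
      by (simp only: card_filter_eq_sum[OF fin])
  qed
  then have "(\<Sum>v\<in>V. card {p\<in>nbhd v \<times> nbhd v. P p}) = (\<Sum>v\<in>V. \<Sum>p\<in>?Q. if ?adj v p then 1 else 0)"
    by simp
  also have "\<dots> = (\<Sum>p\<in>?Q. \<Sum>v\<in>V. if ?adj v p then 1 else 0)"
    by (rule sum.swap)
  also have "\<dots> = (\<Sum>p\<in>?Q. codeg (fst p) (snd p))"
  proof (rule sum.cong[OF refl])
    fix p
    have "{v\<in>V. ?adj v p} = nbhd (fst p) \<inter> nbhd (snd p)"
      using nbhd_subset by blast
    then show "(\<Sum>v\<in>V. if ?adj v p then 1 else 0) = codeg (fst p) (snd p)"
      using finite_V by (simp add: codeg_def flip: card_filter_eq_sum)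
  qed
  finally show ?thesis .
qed

lemma finite_walks: "finite (walks V E k x y)"
proof (rule finite_subset)
  show "walks V E k x y \<subseteq> {vs. set vs \<subseteq> V \<and> length vs = Suc k}"
    unfolding walks_def by auto
  show "finite {vs. set vs \<subseteq> V \<and> length vs = Suc k}"
    using finite_V by (rule finite_lists_length_eq)
qed

lemma walk6_in_walks:
  assumes "x \<in> V" "y \<in> V" "a \<in> nbhd x \<inter> nbhd z" "b \<in> nbhd z \<inter> nbhd w" "c \<in> nbhd w \<inter> nbhd y"
  shows "[x, a, z, b, w, c, y] \<in> walks V E 6 x y"
proof -
  have "E x a" "E a z" "E z b" "E b w" "E w c" "E c y"
    using assms by (auto simp: nbhd_def intro: edge_sym)
  moreover have "z \<in> V" "w \<in> V"
    using \<open>E z b\<close> \<open>E w c\<close> by (auto intro: edge_in_V)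
  ultimately show ?thesis
    using assms unfolding walks_def nbhd_def
    by (auto simp: numeral_eq_Suc less_Suc_eq)
qed

lemma sum_codeg_le_card_walks6:
  assumes "x \<in> V" "y \<in> V"
  shows "(\<Sum>p\<in>V \<times> V. codeg x (fst p) * codeg (fst p) (snd p) * codeg (snd p) y)
           \<le> card (walks V E 6 x y)"
proof -
  define T where "T = (SIGMA p:V \<times> V.
     (nbhd x \<inter> nbhd (fst p)) \<times> (nbhd (fst p) \<inter> nbhd (snd p)) \<times> (nbhd (snd p) \<inter> nbhd y))"
  define walk where "walk = (\<lambda>((z, w), a, b, c). [x, a, z, b, w, c, y])"
  have "inj_on walk T"
    by (auto simp: inj_on_def walk_def T_def)
  moreover have "walk ` T \<subseteq> walks V E 6 x y"
    using assms by (auto simp: walk_def T_def intro!: walk6_in_walks)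
  ultimately have "card T \<le> card (walks V E 6 x y)"
    using finite_walks by (intro card_inj_on_le)
  moreover have "card T = (\<Sum>p\<in>V \<times> V. codeg x (fst p) * codeg (fst p) (snd p) * codeg (snd p) y)"
    using finite_V finite_nbhd by (simp add: T_def codeg_def card_cartesian_product mult.assoc)
  ultimately show ?thesis by simp
qed

lemma card_walks6_ge:
  fixes m :: real
  assumes "x \<in> V" "y \<in> V" "S \<subseteq> V \<times> V" "0 \<le> m"
    and codeg_ge: "\<And>z w. (z, w) \<in> S \<Longrightarrow> m \<le> codeg x z \<and> m \<le> codeg z w \<and> m \<le> codeg w y"
  shows "real (card S) * m ^ 3 \<le> real (card (walks V E 6 x y))"
proof -
  let ?f = "\<lambda>p. codeg x (fst p) * codeg (fst p) (snd p) * codeg (snd p) y"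
  have "real (card S) * m ^ 3 = (\<Sum>p\<in>S. m ^ 3)"
    by simp
  also have "\<dots> \<le> (\<Sum>p\<in>S. real (?f p))"
  proof (rule sum_mono)
    fix p assume "p \<in> S"
    then have "m * m * m \<le> real (?f p)"
      using codeg_ge[of "fst p" "snd p"] \<open>0 \<le> m\<close> by (auto intro!: mult_mono)
    then show "m ^ 3 \<le> real (?f p)"
      by (simp add: power3_eq_cube)
  qed
  also have "\<dots> \<le> (\<Sum>p\<in>V \<times> V. real (?f p))"
    using assms(3) finite_V by (intro sum_mono2) auto
  also have "\<dots> \<le> real (card (walks V E 6 x y))"
    using sum_codeg_le_card_walks6[OF assms(1,2)] by (simp only: of_nat_sum[symmetric] of_nat_le_iff)
  finally show ?thesis .
qed

lemma sum_square_degree_ge: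
  assumes "0 \<le> c" "c * real (card V) ^ 2 \<le> real (card (edges V E))"
  shows "c ^ 2 * real (card V) ^ 3 \<le> (\<Sum>v\<in>V. real (degree v) ^ 2)"
proof (cases "V = {}")
  case False
  let ?n = "real (card V)"
  have "c * ?n ^ 2 \<le> (\<Sum>v\<in>V. real (degree v))"
    using assms(2) card_edges_le_sum_degree by (simp flip: of_nat_sum)
  then have "(c * ?n ^ 2) ^ 2 \<le> (\<Sum>v\<in>V. real (degree v)) ^ 2"
    using assms(1) by (intro power_mono) auto
  also have "\<dots> \<le> (\<Sum>v\<in>V. real (degree v) ^ 2) * ?n"
    by (rule sum_squared_le_sum_of_squares)
  finally have "?n * (c ^ 2 * ?n ^ 3) \<le> ?n * (\<Sum>v\<in>V. real (degree v) ^ 2)"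
    by (simp add: power_mult_distrib eval_nat_numeral mult_ac)
  then show ?thesis
    using False finite_V by (simp add: card_gt_0_iff)
qed simp

lemma exists_vertex_few_bad_pairs:
  assumes "V \<noteq> {}" "0 \<le> c" "c * real (card V) ^ 2 \<le> real (card (edges V E))"
  defines "m \<equiv> c ^ 2 * real (card V) / 16"
  shows "\<exists>v\<in>V. c * real (card V) / 2 \<le> real (degree v) \<and>
           8 * card {p\<in>nbhd v \<times> nbhd v. real (codeg (fst p) (snd p)) < m} \<le> degree v ^ 2"
proof -
  let ?n = "real (card V)"
  let ?bad = "\<lambda>v. real (card {p\<in>nbhd v \<times> nbhd v. real (codeg (fst p) (snd p)) < m})"
  have "(\<Sum>v\<in>V. ?bad v) = (\<Sum>p\<in>{p\<in>V \<times> V. real (codeg (fst p) (snd p)) < m}. real (codeg (fst p) (snd p)))"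
    by (simp only: sum_card_nbhd_pairs of_nat_sum[symmetric])
  also have "\<dots> \<le> real (card {p\<in>V \<times> V. real (codeg (fst p) (snd p)) < m}) * m"
    by (rule sum_bounded_above) simp
  also have "\<dots> \<le> real (card (V \<times> V)) * m"
    using finite_V \<open>0 \<le> c\<close> by (intro mult_right_mono of_nat_mono card_mono) (auto simp: m_def)
  finally have "8 * (\<Sum>v\<in>V. ?bad v) \<le> c ^ 2 * ?n ^ 3 / 2"
    by (simp add: m_def card_cartesian_product eval_nat_numeral mult_ac)
  moreover have "(\<Sum>v\<in>V. real (degree v) ^ 2 - 8 * ?bad v)
      = (\<Sum>v\<in>V. real (degree v) ^ 2) - 8 * (\<Sum>v\<in>V. ?bad v)"
    by (simp add: sum_subtractf sum_distrib_left)
  moreover have "?n * (c ^ 2 * ?n ^ 2 / 2) = c ^ 2 * ?n ^ 3 / 2"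
    by (simp add: eval_nat_numeral)
  ultimately have "?n * (c ^ 2 * ?n ^ 2 / 2) \<le> (\<Sum>v\<in>V. real (degree v) ^ 2 - 8 * ?bad v)"
    using sum_square_degree_ge[OF assms(2,3)] by linarith
  then obtain v where "v \<in> V" and v: "c ^ 2 * ?n ^ 2 / 2 \<le> real (degree v) ^ 2 - 8 * ?bad v"
    using sum_bounded_above_strict[of V "\<lambda>v. real (degree v) ^ 2 - 8 * ?bad v" "c ^ 2 * ?n ^ 2 / 2"]
      assms(1) finite_V by (force simp: card_gt_0_iff)
  have nonneg: "0 \<le> c ^ 2 * ?n ^ 2" "0 \<le> ?bad v"
    by simp_all
  have "(c * ?n / 2) ^ 2 = c ^ 2 * ?n ^ 2 / 4"
    by (simp add: power_mult_distrib power_divide)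
  then have "(c * ?n / 2) ^ 2 \<le> real (degree v) ^ 2"
    using v nonneg by linarith
  then have "c * ?n / 2 \<le> real (degree v)"
    by (rule power2_le_imp_le) simp
  moreover have "8 * ?bad v \<le> real (degree v) ^ 2"
    using v nonneg by linarith
  then have "real (8 * card {p\<in>nbhd v \<times> nbhd v. real (codeg (fst p) (snd p)) < m}) \<le> real (degree v ^ 2)"
    by simp
  then have "8 * card {p\<in>nbhd v \<times> nbhd v. real (codeg (fst p) (snd p)) < m} \<le> degree v ^ 2"
    by (simp only: of_nat_le_iff)
  ultimately show ?thesis
    using \<open>v \<in> V\<close> by blast
qed

lemma card_walks6_ge_in_nbhd:
  fixes m :: real
  assumes "0 \<le> m"
    and bad: "8 * card {p\<in>nbhd v \<times> nbhd v. real (codeg (fst p) (snd p)) < m} \<le> degree v ^ 2"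
    and x: "x \<in> nbhd v" "4 * card {z\<in>nbhd v. real (codeg x z) < m} \<le> degree v"
    and y: "y \<in> nbhd v" "4 * card {w\<in>nbhd v. real (codeg y w) < m} \<le> degree v"
  shows "7 / 16 * real (degree v) ^ 2 * m ^ 3 \<le> real (card (walks V E 6 x y))"
proof -
  define S where "S = {(z, w)\<in>nbhd v \<times> nbhd v.
    \<not> real (codeg x z) < m \<and> \<not> real (codeg z w) < m \<and> \<not> real (codeg y w) < m}"
  have "7 * degree v ^ 2 \<le> 16 * card S"
    unfolding S_def using finite_nbhd bad x(2) y(2)
    by (rule card_good_pairs_ge[where B = "\<lambda>a b. real (codeg a b) < m"])
  then have "real (7 * degree v ^ 2) \<le> real (16 * card S)"
    by (simp only: of_nat_le_iff)
  then have "7 * real (degree v) ^ 2 \<le> 16 * real (card S)"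
    by simp
  then have "7 / 16 * real (degree v) ^ 2 * m ^ 3 \<le> real (card S) * m ^ 3"
    using \<open>0 \<le> m\<close> by (intro mult_right_mono) auto
  also have "\<dots> \<le> real (card (walks V E 6 x y))"
  proof (rule card_walks6_ge)
    show "x \<in> V" "y \<in> V" "S \<subseteq> V \<times> V"
      using x(1) y(1) nbhd_subset by (auto simp: S_def)
    show "m \<le> codeg x z \<and> m \<le> codeg z w \<and> m \<le> codeg w y" if "(z, w) \<in> S" for z w
      using that codeg_commute[of y w] by (auto simp: S_def)
  qed fact
  finally show ?thesis .
qed

lemma exists_set_many_walks6:
  assumes "V \<noteq> {}" "0 \<le> c" "c * real (card V) ^ 2 \<le> real (card (edges V E))"
  shows "\<exists>X\<subseteq>V. c * real (card V) / 4 \<le> real (card X) \<and>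
           (\<forall>x\<in>X. \<forall>y\<in>X. 7 * c ^ 8 * real (card V) ^ 5 / 2 ^ 18 \<le> real (card (walks V E 6 x y)))"
proof -
  let ?n = "real (card V)"
  define m where "m = c ^ 2 * ?n / 16"
  obtain v where deg: "c * ?n / 2 \<le> real (degree v)"
    and bad: "8 * card {p\<in>nbhd v \<times> nbhd v. real (codeg (fst p) (snd p)) < m} \<le> degree v ^ 2"
    using exists_vertex_few_bad_pairs[OF assms] unfolding m_def by blast
  define X where "X = {x\<in>nbhd v. 4 * card {y\<in>nbhd v. real (codeg x y) < m} \<le> degree v}"
  have "X \<subseteq> V"
    using nbhd_subset by (auto simp: X_def)
  moreover have "degree v \<le> 2 * card X"
    unfolding X_def using finite_nbhd bad by (rule card_few_bad_partners_ge)
  then have "c * ?n / 4 \<le> real (card X)"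
    using deg by linarith
  moreover have "7 * c ^ 8 * ?n ^ 5 / 2 ^ 18 \<le> real (card (walks V E 6 x y))"
    if "x \<in> X" "y \<in> X" for x y
  proof -
    have "0 \<le> m"
      using assms(2) by (simp add: m_def)
    have "7 * c ^ 8 * ?n ^ 5 / 2 ^ 18 = 7 / 16 * (c * ?n / 2) ^ 2 * m ^ 3"
      by (simp add: m_def power_mult_distrib power_divide eval_nat_numeral)
    also have "\<dots> \<le> 7 / 16 * real (degree v) ^ 2 * m ^ 3"
      using deg assms(2) \<open>0 \<le> m\<close> by (intro mult_right_mono mult_left_mono power_mono) auto
    also have "\<dots> \<le> real (card (walks V E 6 x y))"
      using \<open>0 \<le> m\<close> bad that by (intro card_walks6_ge_in_nbhd) (auto simp: X_def)
    finally show ?thesis .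
  qed
  ultimately show ?thesis
    by blast
qed

end

theorem lemma2p2:
  fixes V :: "'a set" and E :: "'a \<Rightarrow> 'a \<Rightarrow> bool" and c :: real
  assumes "graph V E"
    and "c > 0"
    and "real (card (edges V E)) \<ge> c * real (card V) ^ 2"
  shows "\<exists>X \<subseteq> V. real (card X) \<ge> 2 powr (-5) * c * real (card V)
           \<and> (\<forall>x\<in>X. \<forall>y\<in>X. real (card (walks V E 6 x y))
                 \<ge> 2 powr (-35) * c ^ 9 * real (card V) ^ 5)"
proof (cases "V = {}")
  case True
  then show ?thesis by auto
next
  case False
  interpret finite_graph V E
    by (rule finite_graph.intro) fact
  let ?n = "real (card V)"
  obtain X where "X \<subseteq> V" and size: "c * ?n / 4 \<le> real (card X)"
    and walks: "\<And>x y. x \<in> X \<Longrightarrow> y \<in> X \<Longrightarrow> 7 * c ^ 8 * ?n ^ 5 / 2 ^ 18 \<le> real (card (walks V E 6 x y))"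
    using exists_set_many_walks6[OF False _ assms(3)] assms(2) by auto
  have "c \<le> 1"
    using False assms(3) by (rule edge_density_le_one)
  then have "c ^ 9 * ?n ^ 5 \<le> c ^ 8 * ?n ^ 5"
    using assms(2) by (intro mult_right_mono power_decreasing) auto
  then have "2 powr (-35) * c ^ 9 * ?n ^ 5 \<le> 1 / 2 ^ 35 * (c ^ 8 * ?n ^ 5)"
    by (simp add: powr_minus powr_realpow divide_simps)
  also have "\<dots> \<le> 7 / 2 ^ 18 * (c ^ 8 * ?n ^ 5)"
    by (intro mult_right_mono) auto
  finally have walks_bound: "2 powr (-35) * c ^ 9 * ?n ^ 5 \<le> 7 * c ^ 8 * ?n ^ 5 / 2 ^ 18"
    by simp
  have size_bound: "2 powr (-5) * c * ?n \<le> c * ?n / 4"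
    using assms(2) by (simp add: powr_minus powr_realpow divide_simps)
  show ?thesis
  proof (intro exI[of _ X] conjI ballI)
    show "X \<subseteq> V" "2 powr (-5) * c * ?n \<le> real (card X)"
      using \<open>X \<subseteq> V\<close> size size_bound by linarith+
    show "2 powr (-35) * c ^ 9 * ?n ^ 5 \<le> real (card (walks V E 6 x y))" if "x \<in> X" "y \<in> X" for x y
      using walks[OF that] walks_bound by linarith
  qed
qed

end
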